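(* Let $G=(V,E)$ be an unweighted undirected graph with $n$ vertices and $m=|E|$ edges, and let $H$ be a $(1\pm\varepsilon)$-spectral sparsifier of $G$ for some small enough constant $\varepsilon>0$. Let $\widehat{H}$ denote the unweighted version of $H$. If for a pair of vertices $u,v\in V$ we set $s:=d_{\widehat{H}}(u,v)$, then $$R^G_{u,v}=\widetilde{\Omega}\!\left(\frac{s^2}{m}\right)\quad\text{and}\quad R^H_{u,v}=\widetilde{\Omega}\!\left(\frac{s^2}{m}\right).$$
   Context: A $(1\pm\varepsilon)$-spectral sparsifier of $G$ is a weighted graph $H=(V,E_H,w)$ with $E_H\subseteq E$ and positive weights such that $(1-\varepsilon)L_H\preceq L_G\preceq(1+\varepsilon)L_H$, where $L_G=B_G^\top B_G$ ($B_G$ the edge–vertex incidence matrix), $L_H=B_H^\top WB_H$ ($W$ the diagonal matrix of edge weights), and $A\preceq B$ means $x^\top Ax\le x^\top Bx$ for all $x$. $\widehat{H}$ is the graph $(V,E_H)$ with all weights equal to $1$, and $d_{\widehat{H}}$ its shortest-path (hop) distance. The effective resistance between $u,v$ in a graph $K$ is $R^K_{u,v}=b_{uv}^\top L_K^{+}b_{uv}$, where $b_{uv}=\chi_u-\chi_v$ and $L_K^+$ is the Moore–Penrose pseudoinverse. $\widetilde{\Omega}(f)$ means $f/\mathrm{polylog}(n)$. *)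

theory Defs
  imports Complex_Main "Jordan_Normal_Form.Matrix" "HOL-Library.Extended_Nat"
begin

text \<open>Weighted Laplacian  L = B^T W B, written entrywise (orientation independent):
  L_ij = sum over edges e of w e * (b_e)_i * (b_e)_j.\<close>

definition simple_graph :: "nat \<Rightarrow> nat set set \<Rightarrow> bool" where
  "simple_graph n E \<longleftrightarrow> (\<forall>e\<in>E. \<exists>a b. a < n \<and> b < n \<and> a \<noteq> b \<and> e = {a, b})"

definition laplacian :: "nat \<Rightarrow> nat set set \<Rightarrow> (nat set \<Rightarrow> real) \<Rightarrow> real mat" where
  "laplacian n E w = mat n n (\<lambda>(i, j). \<Sum>e\<in>E. w e *
      (if i = j then (if i \<in> e then 1 else 0) else (if e = {i, j} then -1 else 0)))"

definition loewner_le :: "real mat \<Rightarrow> real mat \<Rightarrow> bool" where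
  "loewner_le A B \<longleftrightarrow> (\<forall>x \<in> carrier_vec (dim_col A). x \<bullet> (A *\<^sub>v x) \<le> x \<bullet> (B *\<^sub>v x))"

definition is_spectral_sparsifier ::
  "nat \<Rightarrow> real \<Rightarrow> nat set set \<Rightarrow> nat set set \<Rightarrow> (nat set \<Rightarrow> real) \<Rightarrow> bool" where
  "is_spectral_sparsifier n \<epsilon> E EH w \<longleftrightarrow>
     EH \<subseteq> E \<and> (\<forall>e\<in>EH. w e > 0) \<and>
     loewner_le ((1 - \<epsilon>) \<cdot>\<^sub>m laplacian n EH w) (laplacian n E (\<lambda>_. 1)) \<and>
     loewner_le (laplacian n E (\<lambda>_. 1)) ((1 + \<epsilon>) \<cdot>\<^sub>m laplacian n EH w)"

definition pinv :: "real mat \<Rightarrow> real mat" where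
  "pinv A = (THE X. X \<in> carrier_mat (dim_col A) (dim_row A) \<and>
      A * X * A = A \<and> X * A * X = X \<and>
      transpose_mat (A * X) = A * X \<and> transpose_mat (X * A) = X * A)"

definition bvec :: "nat \<Rightarrow> nat \<Rightarrow> nat \<Rightarrow> real vec" where
  "bvec n u v = vec n (\<lambda>i. (if i = u then 1 else 0) - (if i = v then 1 else 0))"

definition eff_res :: "real mat \<Rightarrow> nat \<Rightarrow> nat \<Rightarrow> real" where
  "eff_res L u v = bvec (dim_row L) u v \<bullet> (pinv L *\<^sub>v bvec (dim_row L) u v)"

definition walk_of_len :: "nat set set \<Rightarrow> nat \<Rightarrow> nat \<Rightarrow> nat \<Rightarrow> bool" where
  "walk_of_len EH u v k \<longleftrightarrow> (\<exists>p. length p = Suc k \<and> hd p = u \<and> last p = v \<and>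
      (\<forall>i<k. {p ! i, p ! Suc i} \<in> EH))"

definition hop_dist :: "nat set set \<Rightarrow> nat \<Rightarrow> nat \<Rightarrow> enat" where
  "hop_dist EH u v = (if \<exists>k. walk_of_len EH u v k
      then enat (LEAST k. walk_of_len EH u v k) else \<infinity>)"

end

theory Submission
  imports Defs "Jordan_Normal_Form.Determinant"
begin

(* Let x be the hop distance in the unweighted H from u, capped at s. It changes by at most one
   across every edge of H, so its H-energy x^T L_H x is at most the total weight W of H; comparing
   the traces of the Laplacians in (1 - eps) L_H <= L_G gives (1 - eps) W <= m, hence W <= 2m,
   and the sparsifier bound L_G <= (1 + eps) L_H gives x^T L_G x <= 3m.  On the other hand, for
   y = L^+ b_uv we have L y = b_uv, so Cauchy-Schwarz for the form (x, y) -> x^T L y yields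
   s^2 = (x_u - x_v)^2 <= R_uv * x^T L x in both graphs.  Thus R_uv >= s^2 / (3m), without any
   polylogarithmic loss, for every eps <= 1/2.  The pseudoinverse is computed explicitly as
   (L + P)^-1 - P, where P is the orthogonal projection onto the vectors that are constant on
   connected components. *)

section \<open>Linear algebra\<close>

lemma weighted_Cauchy_Schwarz_sum:
  fixes w a b :: "'a \<Rightarrow> real"
  assumes "\<And>i. i \<in> I \<Longrightarrow> 0 \<le> w i"
  shows "(\<Sum>i\<in>I. w i * (a i * b i))\<^sup>2 \<le> (\<Sum>i\<in>I. w i * (a i)\<^sup>2) * (\<Sum>i\<in>I. w i * (b i)\<^sup>2)"
proof -
  let ?S = "\<lambda>f. \<Sum>i\<in>I. \<Sum>j\<in>I. w i * w j * f i j"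
  have "0 \<le> ?S (\<lambda>i j. (a i * b j - a j * b i)\<^sup>2)"
    using assms by (intro sum_nonneg) simp
  also have "\<dots> = ?S (\<lambda>i j. (a i * b j)\<^sup>2) + ?S (\<lambda>i j. (a j * b i)\<^sup>2)
      - 2 * ?S (\<lambda>i j. (a i * b i) * (a j * b j))"
    by (simp add: power2_eq_square algebra_simps sum_subtractf sum.distrib sum_distrib_left)
  also have "?S (\<lambda>i j. (a j * b i)\<^sup>2) = ?S (\<lambda>i j. (a i * b j)\<^sup>2)"
    by (subst sum.swap) (simp add: ac_simps)
  also have "?S (\<lambda>i j. (a i * b j)\<^sup>2) = (\<Sum>i\<in>I. w i * (a i)\<^sup>2) * (\<Sum>i\<in>I. w i * (b i)\<^sup>2)"
    by (simp add: sum_product power_mult_distrib ac_simps)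
  also have "?S (\<lambda>i j. (a i * b i) * (a j * b j)) = (\<Sum>i\<in>I. w i * (a i * b i))\<^sup>2"
    by (simp add: power2_eq_square sum_product ac_simps)
  finally show ?thesis by simp
qed

lemma scalar_prod_mult_mat_vec:
  fixes A :: "'a :: comm_semiring_0 mat"
  assumes "A \<in> carrier_mat n n" "x \<in> carrier_vec n" "y \<in> carrier_vec n"
  shows "y \<bullet> (A *\<^sub>v x) = (\<Sum>i<n. \<Sum>j<n. y $ i * A $$ (i, j) * x $ j)"
  using assms
  by (simp add: scalar_prod_def mult_mat_vec_def row_def lessThan_atLeast0 sum_distrib_left mult.assoc)

lemma scalar_prod_smult_mat_vec:
  fixes A :: "'a :: comm_ring mat"
  assumes "A \<in> carrier_mat n n" "x \<in> carrier_vec n"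
  shows "x \<bullet> ((c \<cdot>\<^sub>m A) *\<^sub>v x) = c * (x \<bullet> (A *\<^sub>v x))"
  using assms by (simp add: scalar_prod_mult_mat_vec[OF smult_carrier_mat[OF assms(1)] assms(2,2)]
      scalar_prod_mult_mat_vec[OF assms assms(2)] sum_distrib_left ac_simps)

lemma unit_vec_quadratic_form:
  fixes A :: "'a :: semiring_1 mat"
  assumes "A \<in> carrier_mat n n" "i < n"
  shows "unit_vec n i \<bullet> (A *\<^sub>v unit_vec n i) = A $$ (i, i)"
  using assms by simp

lemma scalar_prod_self_nonneg: "0 \<le> (v :: real vec) \<bullet> v"
  unfolding scalar_prod_def by (intro sum_nonneg) simp

lemma scalar_prod_self_eq_0: "(v :: real vec) \<bullet> v = 0 \<Longrightarrow> v = 0\<^sub>v (dim_vec v)"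
  unfolding scalar_prod_def by (rule eq_vecI) (simp_all add: sum_nonneg_eq_0_iff)

lemma symmetric_idempotent_quadratic_form:
  fixes P :: "real mat"
  assumes P: "P \<in> carrier_mat n n" "transpose_mat P = P" "P * P = P" and x: "x \<in> carrier_vec n"
  shows "x \<bullet> (P *\<^sub>v x) = (P *\<^sub>v x) \<bullet> (P *\<^sub>v x)"
proof -
  have "x \<bullet> (P *\<^sub>v x) = x \<bullet> (P *\<^sub>v (P *\<^sub>v x))"
    using P x by (simp add: assoc_mult_mat_vec[symmetric])
  also have "\<dots> = (transpose_mat P *\<^sub>v x) \<bullet> (P *\<^sub>v x)"
    by (rule transpose_vec_mult_scalar[OF P(1) mult_mat_vec_carrier[OF P(1) x] x, symmetric])
  finally show ?thesis using P(2) by simp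
qed

definition penrose_inverse :: "real mat \<Rightarrow> real mat \<Rightarrow> bool" where
  "penrose_inverse A X \<longleftrightarrow> A * X * A = A \<and> X * A * X = X \<and>
     transpose_mat (A * X) = A * X \<and> transpose_mat (X * A) = X * A"

lemma penrose_inverse_unique:
  assumes c: "A \<in> carrier_mat n n" "X \<in> carrier_mat n n" "Y \<in> carrier_mat n n"
    and "penrose_inverse A X" "penrose_inverse A Y"
  shows "X = Y"
proof -
  note as = assoc_mult_mat[of _ n n _ n _ n]
  note tr = transpose_mult[of _ n n _ n]
  from assms(4,5) have X: "A * X * A = A" "X * A * X = X" "transpose_mat (A * X) = A * X"
      "transpose_mat (X * A) = X * A"
    and Y: "A * Y * A = A" "Y * A * Y = Y" "transpose_mat (A * Y) = A * Y"
      "transpose_mat (Y * A) = Y * A"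
    unfolding penrose_inverse_def by blast+
  have AX: "A * X = A * Y"
  proof -
    have "A * X = (A * Y * A) * X" by (simp only: Y(1))
    also have "\<dots> = (A * Y) * (A * X)" using c by (simp only: as mult_carrier_mat)
    also have "\<dots> = transpose_mat ((A * X) * (A * Y))"
      using c by (simp only: X(3) Y(3) tr mult_carrier_mat)
    also have "(A * X) * (A * Y) = (A * X * A) * Y" using c by (simp only: as mult_carrier_mat)
    also have "\<dots> = A * Y" by (simp only: X(1))
    finally show ?thesis by (simp only: Y(3))
  qed
  have XA: "X * A = Y * A"
  proof -
    have "X * A = X * (A * Y * A)" by (simp only: Y(1))
    also have "\<dots> = (X * A) * (Y * A)" using c by (simp only: as mult_carrier_mat)
    also have "\<dots> = transpose_mat ((Y * A) * (X * A))"
      using c by (simp only: X(4) Y(4) tr mult_carrier_mat)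
    also have "(Y * A) * (X * A) = Y * (A * X * A)" using c by (simp only: as mult_carrier_mat)
    also have "\<dots> = Y * A" by (simp only: X(1))
    finally show ?thesis by (simp only: Y(4))
  qed
  have "X = X * (A * X)" using c by (simp only: X(2) as[symmetric])
  also have "\<dots> = (Y * A) * Y" using c by (simp only: AX as[symmetric] XA)
  finally show ?thesis by (simp only: Y(2))
qed

lemma pinv_eqI:
  assumes "A \<in> carrier_mat n n" "X \<in> carrier_mat n n" "penrose_inverse A X"
  shows "pinv A = X"
  unfolding pinv_def
proof (rule the_equality)
  show "X \<in> carrier_mat (dim_col A) (dim_row A) \<and> A * X * A = A \<and> X * A * X = X \<and>
      transpose_mat (A * X) = A * X \<and> transpose_mat (X * A) = X * A"
    using assms unfolding penrose_inverse_def by simp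
next
  fix Y assume "Y \<in> carrier_mat (dim_col A) (dim_row A) \<and> A * Y * A = A \<and> Y * A * Y = Y \<and>
      transpose_mat (A * Y) = A * Y \<and> transpose_mat (Y * A) = Y * A"
  then show "Y = X"
    using penrose_inverse_unique[OF assms(1) _ assms(2) _ assms(3)] assms(1)
    unfolding penrose_inverse_def by auto
qed

lemma mat_minus_eq_of_add_eq:
  fixes B C D :: "'a :: ab_group_add mat"
  assumes "B \<in> carrier_mat n m" "C \<in> carrier_mat n m" "B + C = D"
  shows "B = D - C"
  using assms by (intro eq_matI) auto

lemma invertible_of_injective_mat:
  fixes A :: "real mat"
  assumes "A \<in> carrier_mat n n" "\<And>x. x \<in> carrier_vec n \<Longrightarrow> A *\<^sub>v x = 0\<^sub>v n \<Longrightarrow> x = 0\<^sub>v n"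
  obtains M where "M \<in> carrier_mat n n" "M * A = 1\<^sub>m n" "A * M = 1\<^sub>m n"
proof -
  have "det A \<noteq> 0" using det_0_iff_vec_prod_zero_field[OF assms(1)] assms(2) by blast
  then show ?thesis
    using det_non_zero_imp_unit[OF assms(1)] that unfolding Units_def ring_mat_def by auto
qed

lemma penrose_inverseI:
  assumes "A * X = Q" "X * A = Q" "transpose_mat Q = Q" "Q * A = A" "Q * X = X"
  shows "penrose_inverse A X"
  using assms unfolding penrose_inverse_def by simp

lemma kernel_projection_mult_eqs:
  fixes A P M :: "real mat"
  assumes c: "A \<in> carrier_mat n n" "P \<in> carrier_mat n n" "M \<in> carrier_mat n n"
    and A: "transpose_mat A = A" and P: "transpose_mat P = P" "P * P = P"
    and AP: "A * P = 0\<^sub>m n n"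
    and M: "M * (A + P) = 1\<^sub>m n" "(A + P) * M = 1\<^sub>m n"
  shows "P * A = 0\<^sub>m n n" "M * P = P" "P * M = P"
proof -
  note as = assoc_mult_mat[of _ n n _ n _ n]
  have "P * A = transpose_mat (A * P)"
    using c by (simp only: transpose_mult[of A n n P n] A P(1))
  then show PA: "P * A = 0\<^sub>m n n" by (simp add: AP)
  have "(A + P) * P = A * P + P * P" using c by (intro add_mult_distrib_mat) auto
  then have AP_P: "(A + P) * P = P" using c by (simp add: AP P(2))
  have "M * P = M * ((A + P) * P)" by (simp only: AP_P)
  also have "\<dots> = (M * (A + P)) * P" using c by (simp add: as)
  finally show "M * P = P" using c by (simp add: M(1))
  have "P * (A + P) = P * A + P * P" using c by (intro mult_add_distrib_mat) auto
  then have PA_P: "P * (A + P) = P" using c by (simp add: PA P(2))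
  have "P * M = (P * (A + P)) * M" by (simp only: PA_P)
  also have "\<dots> = P * ((A + P) * M)" using c by (simp add: as)
  finally show "P * M = P" using c by (simp add: M(2))
qed

lemma penrose_inverse_kernel_projection:
  fixes A P M :: "real mat"
  assumes c: "A \<in> carrier_mat n n" "P \<in> carrier_mat n n" "M \<in> carrier_mat n n"
    and "transpose_mat A = A" and P: "transpose_mat P = P" "P * P = P"
    and AP: "A * P = 0\<^sub>m n n"
    and M: "M * (A + P) = 1\<^sub>m n" "(A + P) * M = 1\<^sub>m n"
  shows "penrose_inverse A (M - P)" "A * (M - P) = 1\<^sub>m n - P"
proof -
  note eqs = kernel_projection_mult_eqs[OF assms]
  have "(A + P) * M = A * M + P * M" using c by (intro add_mult_distrib_mat) auto
  then have "A * M = 1\<^sub>m n - P"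
    using c by (intro mat_minus_eq_of_add_eq[of _ n n]) (auto simp: M(2) eqs(3))
  moreover have "A * (M - P) = A * M - A * P" using c by (intro mult_minus_distrib_mat) auto
  ultimately show AX: "A * (M - P) = 1\<^sub>m n - P" unfolding AP using c by auto
  have "M * (A + P) = M * A + M * P" using c by (intro mult_add_distrib_mat) auto
  then have "M * A = 1\<^sub>m n - P"
    using c by (intro mat_minus_eq_of_add_eq[of _ n n]) (auto simp: M(1) eqs(2))
  moreover have "(M - P) * A = M * A - P * A" using c by (intro minus_mult_distrib_mat) auto
  ultimately have XA: "(M - P) * A = 1\<^sub>m n - P" unfolding eqs(1) using c by auto
  have Q: "transpose_mat (1\<^sub>m n - P) = 1\<^sub>m n - P"
    using c by (simp add: transpose_minus[of _ n n] P(1))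
  have "(1\<^sub>m n - P) * A = 1\<^sub>m n * A - P * A" using c by (intro minus_mult_distrib_mat) auto
  then have QA: "(1\<^sub>m n - P) * A = A" unfolding eqs(1) using c by auto
  have "(1\<^sub>m n - P) * (M - P) = 1\<^sub>m n * (M - P) - P * (M - P)"
    using c by (intro minus_mult_distrib_mat) auto
  moreover have "P * (M - P) = P * M - P * P" using c by (intro mult_minus_distrib_mat) auto
  ultimately have QX: "(1\<^sub>m n - P) * (M - P) = M - P" unfolding eqs(3) P(2) using c by auto
  show "penrose_inverse A (M - P)" by (rule penrose_inverseI[OF AX XA Q QA QX])
qed

lemma mult_pinv_kernel_projection:
  fixes A P :: "real mat"
  assumes c: "A \<in> carrier_mat n n" "P \<in> carrier_mat n n"
    and "transpose_mat A = A" "transpose_mat P = P" "P * P = P" "A * P = 0\<^sub>m n n"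
    and inj: "\<And>x. x \<in> carrier_vec n \<Longrightarrow> (A + P) *\<^sub>v x = 0\<^sub>v n \<Longrightarrow> x = 0\<^sub>v n"
  shows "pinv A \<in> carrier_mat n n" "A * pinv A = 1\<^sub>m n - P"
proof -
  obtain M where M: "M \<in> carrier_mat n n" "M * (A + P) = 1\<^sub>m n" "(A + P) * M = 1\<^sub>m n"
    using invertible_of_injective_mat[of "A + P" n] c inj by auto
  note penrose = penrose_inverse_kernel_projection[OF c M(1) assms(3-6) M(2,3)]
  have "pinv A = M - P"
    using c M(1) by (intro pinv_eqI[OF c(1) _ penrose(1)]) (rule minus_carrier_mat)
  then show "pinv A \<in> carrier_mat n n" "A * pinv A = 1\<^sub>m n - P"
    using penrose(2) minus_carrier_mat[OF c(2)] by simp_all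
qed

section \<open>Laplacians\<close>

lemma simple_graph_mono: "simple_graph n F \<Longrightarrow> F' \<subseteq> F \<Longrightarrow> simple_graph n F'"
  unfolding simple_graph_def by blast

lemma simple_graph_finite: "simple_graph n F \<Longrightarrow> finite F"
proof -
  assume "simple_graph n F"
  then have "F \<subseteq> (\<lambda>(a, b). {a, b}) ` ({..<n} \<times> {..<n})"
    unfolding simple_graph_def by fastforce
  then show "finite F" by (rule finite_subset) simp
qed

lemma bvec_carrier [simp]: "bvec n u v \<in> carrier_vec n"
  unfolding bvec_def by simp

lemma bvec_scalar_prod:
  assumes "u < n" "v < n" "x \<in> carrier_vec n"
  shows "bvec n u v \<bullet> x = x $ u - x $ v"
proof -
  have "bvec n u v \<bullet> x = (\<Sum>i<n. (if i = u then x $ i else 0) - (if i = v then x $ i else 0))"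
    using assms(3) unfolding scalar_prod_def bvec_def lessThan_atLeast0 by (intro sum.cong) auto
  also have "\<dots> = x $ u - x $ v"
    using assms(1,2) by (simp add: sum_subtractf)
  finally show ?thesis .
qed

definition edge_ends :: "nat set \<Rightarrow> nat \<times> nat" where
  "edge_ends e = (SOME (a, b). a \<noteq> b \<and> e = {a, b})"

text \<open>A row of the incidence matrix \<open>B\<close>. Its sign depends on the arbitrary orientation chosen by
  \<^const>\<open>edge_ends\<close>, which never matters: it only enters through products of two such rows
  and through absolute values.\<close>
definition edge_vec :: "nat \<Rightarrow> nat set \<Rightarrow> real vec" where
  "edge_vec n e = bvec n (fst (edge_ends e)) (snd (edge_ends e))"

lemma edge_ends_doubleton:
  assumes "a \<noteq> b"
  shows "edge_ends {a, b} = (a, b) \<or> edge_ends {a, b} = (b, a)"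
proof -
  have "\<exists>p. case p of (a', b') \<Rightarrow> a' \<noteq> b' \<and> {a, b} = {a', b'}"
    using assms by auto
  then have "case edge_ends {a, b} of (a', b') \<Rightarrow> a' \<noteq> b' \<and> {a, b} = {a', b'}"
    unfolding edge_ends_def by (rule someI_ex)
  then show ?thesis by (auto simp: doubleton_eq_iff split: prod.splits)
qed

lemma bvec_swap: "bvec n b a = - bvec n a b"
  unfolding bvec_def by (rule eq_vecI) auto

lemma edge_vec_doubleton:
  assumes "a \<noteq> b"
  obtains "edge_vec n {a, b} = bvec n a b" | "edge_vec n {a, b} = - bvec n a b"
  using edge_ends_doubleton[OF assms] unfolding edge_vec_def by (metis bvec_swap fst_conv snd_conv)

lemma abs_edge_vec_scalar_prod:
  assumes "a < n" "b < n" "a \<noteq> b" "x \<in> carrier_vec n"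
  shows "\<bar>edge_vec n {a, b} \<bullet> x\<bar> = \<bar>x $ a - x $ b\<bar>"
  using assms by (cases rule: edge_vec_doubleton[OF assms(3), of n]) (simp_all add: bvec_scalar_prod)

lemma laplacian_carrier [simp]: "laplacian n F w \<in> carrier_mat n n"
  and laplacian_dim [simp]: "dim_row (laplacian n F w) = n" "dim_col (laplacian n F w) = n"
  unfolding laplacian_def by simp_all

lemma transpose_laplacian [simp]: "transpose_mat (laplacian n F w) = laplacian n F w"
  unfolding laplacian_def by (rule eq_matI) (auto simp: insert_commute intro!: sum.cong)

lemma laplacian_entry_edge:
  assumes "a < n" "b < n" "a \<noteq> b" "i < n" "j < n"
  shows "(if i = j then (if i \<in> {a, b} then 1 else 0) else (if {a, b} = {i, j} then -1 else 0))
    = edge_vec n {a, b} $ i * edge_vec n {a, b} $ j"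
proof -
  have "edge_vec n {a, b} $ i * edge_vec n {a, b} $ j = bvec n a b $ i * bvec n a b $ j"
    using assms by (cases rule: edge_vec_doubleton[OF assms(3), of n]) (simp_all add: bvec_def)
  also have "\<dots> = (if i = j then (if i \<in> {a, b} then 1 else 0) else (if {a, b} = {i, j} then -1 else 0))"
    using assms by (cases "i = a"; cases "i = b"; cases "j = a"; cases "j = b")
      (simp_all add: bvec_def doubleton_eq_iff)
  finally show ?thesis by simp
qed

lemma laplacian_eq_sum_edges:
  assumes "simple_graph n F"
  shows "laplacian n F w = mat n n (\<lambda>(i, j). \<Sum>e\<in>F. w e * (edge_vec n e $ i * edge_vec n e $ j))"
  unfolding laplacian_def
proof (intro eq_matI; simp)
  fix i j assume ij: "i < n" "j < n"
  show "(\<Sum>e\<in>F. w e * (if i = j then (if i \<in> e then 1 else 0) else (if e = {i, j} then -1 else 0)))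
    = (\<Sum>e\<in>F. w e * (edge_vec n e $ i * edge_vec n e $ j))"
  proof (intro sum.cong refl)
    fix e assume "e \<in> F"
    then obtain a b where ab: "a < n" "b < n" "a \<noteq> b" and e: "e = {a, b}"
      using assms unfolding simple_graph_def by blast
    show "w e * (if i = j then (if i \<in> e then 1 else 0) else (if e = {i, j} then -1 else 0))
      = w e * (edge_vec n e $ i * edge_vec n e $ j)"
      unfolding e laplacian_entry_edge[OF ab ij] ..
  qed
qed

lemma scalar_prod_laplacian:
  assumes "simple_graph n F" and x: "x \<in> carrier_vec n" and y: "y \<in> carrier_vec n"
  shows "y \<bullet> (laplacian n F w *\<^sub>v x) = (\<Sum>e\<in>F. w e * ((edge_vec n e \<bullet> y) * (edge_vec n e \<bullet> x)))"
proof -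
  have "y \<bullet> (laplacian n F w *\<^sub>v x)
      = (\<Sum>i<n. \<Sum>j<n. y $ i * (\<Sum>e\<in>F. w e * (edge_vec n e $ i * edge_vec n e $ j)) * x $ j)"
    unfolding laplacian_eq_sum_edges[OF assms(1)] scalar_prod_mult_mat_vec[OF mat_carrier x y]
    by simp
  also have "\<dots> = (\<Sum>e\<in>F. w e *
      (\<Sum>i<n. \<Sum>j<n. (edge_vec n e $ i * y $ i) * (edge_vec n e $ j * x $ j)))"
    by (simp add: sum_distrib_left sum_distrib_right sum.swap[of _ F] ac_simps)
  also have "\<dots> = (\<Sum>e\<in>F. w e * ((edge_vec n e \<bullet> y) * (edge_vec n e \<bullet> x)))"
    using x y by (simp add: scalar_prod_def lessThan_atLeast0 sum_product)
  finally show ?thesis .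
qed

lemma laplacian_quadratic_form:
  assumes "simple_graph n F" "x \<in> carrier_vec n"
  shows "x \<bullet> (laplacian n F w *\<^sub>v x) = (\<Sum>e\<in>F. w e * (edge_vec n e \<bullet> x)\<^sup>2)"
  using scalar_prod_laplacian[OF assms assms(2)] by (simp add: power2_eq_square)

lemma laplacian_quadratic_form_nonneg:
  assumes "simple_graph n F" "\<forall>e\<in>F. 0 < w e" "x \<in> carrier_vec n"
  shows "0 \<le> x \<bullet> (laplacian n F w *\<^sub>v x)"
  using assms by (simp add: laplacian_quadratic_form less_imp_le sum_nonneg)

lemma sum_diagonal_laplacian:
  assumes "simple_graph n F"
  shows "(\<Sum>i<n. laplacian n F w $$ (i, i)) = 2 * (\<Sum>e\<in>F. w e)"
proof -
  have "(\<Sum>i<n. laplacian n F w $$ (i, i)) = (\<Sum>e\<in>F. w e * (\<Sum>i<n. if i \<in> e then 1 else 0))"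
    by (simp add: laplacian_def sum.swap[of _ F] sum_distrib_left)
  also have "\<dots> = (\<Sum>e\<in>F. w e * 2)"
  proof (intro sum.cong refl)
    fix e assume "e \<in> F"
    then obtain a b where ab: "a < n" "b < n" "a \<noteq> b" and e: "e = {a, b}"
      using assms unfolding simple_graph_def by blast
    have "(\<Sum>i<n. if i \<in> e then 1 else 0) = (\<Sum>i<n. (if i = a then 1 else 0) + (if i = b then 1 else 0) :: real)"
      using ab(3) unfolding e by (intro sum.cong) auto
    also have "\<dots> = 2" using ab by (simp add: sum.distrib)
    finally show "w e * (\<Sum>i<n. if i \<in> e then 1 else 0) = w e * 2" by simp
  qed
  finally show ?thesis by (simp add: sum_distrib_right mult.commute)
qed

section \<open>Connected components and the pseudoinverse of the Laplacian\<close>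

definition edge_rel :: "nat set set \<Rightarrow> (nat \<times> nat) set" where
  "edge_rel F = {(a, b). {a, b} \<in> F}"

lemma sym_edge_rel: "sym (edge_rel F)"
  unfolding edge_rel_def sym_def by (simp add: insert_commute)

lemma rtrancl_edge_rel_sym: "(i, j) \<in> (edge_rel F)\<^sup>* \<Longrightarrow> (j, i) \<in> (edge_rel F)\<^sup>*"
  by (rule symD[OF sym_rtrancl[OF sym_edge_rel]])

lemma rtrancl_edge_rel_eq:
  assumes "\<And>a b. {a, b} \<in> F \<Longrightarrow> f a = f b" "(i, j) \<in> (edge_rel F)\<^sup>*"
  shows "f i = f j"
  using assms(2) by induction (auto simp: edge_rel_def dest: assms(1))

definition const_on_components :: "nat \<Rightarrow> nat set set \<Rightarrow> real vec \<Rightarrow> bool" where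
  "const_on_components n F x \<longleftrightarrow> (\<forall>i<n. \<forall>j<n. (i, j) \<in> (edge_rel F)\<^sup>* \<longrightarrow> x $ i = x $ j)"

lemma const_on_componentsD:
  "const_on_components n F x \<Longrightarrow> (i, j) \<in> (edge_rel F)\<^sup>* \<Longrightarrow> i < n \<Longrightarrow> j < n \<Longrightarrow> x $ i = x $ j"
  unfolding const_on_components_def by blast

lemma const_on_components_edge_vec:
  assumes "simple_graph n F" "x \<in> carrier_vec n" "const_on_components n F x" "e \<in> F"
  shows "edge_vec n e \<bullet> x = 0"
proof -
  obtain a b where ab: "a < n" "b < n" "a \<noteq> b" and e: "e = {a, b}"
    using assms(1,4) unfolding simple_graph_def by blast
  then have "(a, b) \<in> (edge_rel F)\<^sup>*" using assms(4) by (auto simp: edge_rel_def)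
  then have "x $ a = x $ b" by (rule const_on_componentsD[OF assms(3) _ ab(1,2)])
  then show ?thesis using abs_edge_vec_scalar_prod[OF ab assms(2)] e by simp
qed

lemma const_on_components_of_laplacian_quadratic_form_eq_0:
  assumes F: "simple_graph n F" and w: "\<forall>e\<in>F. 0 < w e" and x: "x \<in> carrier_vec n"
    and "x \<bullet> (laplacian n F w *\<^sub>v x) = 0"
  shows "const_on_components n F x"
proof -
  have "x $ a = x $ b" if "{a, b} \<in> F" for a b
  proof -
    obtain a' b' where ab: "a' < n" "b' < n" "a' \<noteq> b'" and e: "{a, b} = {a', b'}"
      using F \<open>{a, b} \<in> F\<close> unfolding simple_graph_def by blast
    have "\<forall>e\<in>F. w e * (edge_vec n e \<bullet> x)\<^sup>2 = 0"
      using assms(4) w simple_graph_finite[OF F]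
      by (subst sum_nonneg_eq_0_iff[symmetric]) (auto simp: laplacian_quadratic_form[OF F x] less_imp_le)
    then have "edge_vec n {a', b'} \<bullet> x = 0"
      using w \<open>{a, b} \<in> F\<close> e by fastforce
    then have "x $ a' = x $ b'"
      using abs_edge_vec_scalar_prod[OF ab x] by simp
    then show ?thesis using e by (auto simp: doubleton_eq_iff)
  qed
  then show ?thesis
    unfolding const_on_components_def by (blast intro: rtrancl_edge_rel_eq)
qed

lemma laplacian_mult_vec_eq_0:
  assumes F: "simple_graph n F" and x: "x \<in> carrier_vec n" and "const_on_components n F x"
  shows "laplacian n F w *\<^sub>v x = 0\<^sub>v n"
proof (rule eq_vecI)
  fix i assume "i < dim_vec (0\<^sub>v n :: real vec)"
  then have i: "i < n" by simp
  have "(laplacian n F w *\<^sub>v x) $ i = unit_vec n i \<bullet> (laplacian n F w *\<^sub>v x)"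
    by (rule scalar_prod_left_unit[OF mult_mat_vec_carrier[OF laplacian_carrier x] i, symmetric])
  also have "\<dots> = 0"
    unfolding scalar_prod_laplacian[OF F x unit_vec_carrier]
    using const_on_components_edge_vec[OF F x assms(3)] by simp
  finally show "(laplacian n F w *\<^sub>v x) $ i = 0\<^sub>v n $ i" using i by simp
qed simp

definition component :: "nat \<Rightarrow> nat set set \<Rightarrow> nat \<Rightarrow> nat set" where
  "component n F i = {j. j < n \<and> (i, j) \<in> (edge_rel F)\<^sup>*}"

lemma component_eq:
  "(i, j) \<in> (edge_rel F)\<^sup>* \<Longrightarrow> component n F i = component n F j"
  unfolding component_def by (blast intro: rtrancl_trans rtrancl_edge_rel_sym)

lemma card_component_pos: "i < n \<Longrightarrow> 0 < card (component n F i)"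
  by (subst card_gt_0_iff) (auto simp: component_def)

text \<open>The orthogonal projection onto the kernel of the Laplacian, i.e. onto the vectors that are
  constant on every connected component.\<close>
definition component_proj :: "nat \<Rightarrow> nat set set \<Rightarrow> real mat" where
  "component_proj n F = mat n n (\<lambda>(i, j).
     if (i, j) \<in> (edge_rel F)\<^sup>* then 1 / real (card (component n F i)) else 0)"

lemma component_proj_carrier [simp]: "component_proj n F \<in> carrier_mat n n"
  and component_proj_dim [simp]: "dim_row (component_proj n F) = n" "dim_col (component_proj n F) = n"
  unfolding component_proj_def by simp_all

lemma component_proj_mult_vec:
  assumes "i < n" "x \<in> carrier_vec n"
  shows "(component_proj n F *\<^sub>v x) $ i = (\<Sum>j\<in>component n F i. x $ j) / real (card (component n F i))"
proof -
  have "(component_proj n F *\<^sub>v x) $ i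
      = (\<Sum>j<n. if j \<in> component n F i then x $ j / real (card (component n F i)) else 0)"
    using assms unfolding component_proj_def component_def
    by (auto simp: scalar_prod_def lessThan_atLeast0 intro!: sum.cong)
  also have "\<dots> = (\<Sum>j\<in>component n F i. x $ j) / real (card (component n F i))"
    by (simp add: sum.If_cases sum_divide_distrib component_def Collect_conj_eq lessThan_def Int_commute)
  finally show ?thesis .
qed

lemma component_proj_fixes:
  assumes "x \<in> carrier_vec n" "const_on_components n F x"
  shows "component_proj n F *\<^sub>v x = x"
proof (rule eq_vecI)
  fix i assume "i < dim_vec x"
  then have i: "i < n" using assms(1) by simp
  have "x $ j = x $ i" if "j \<in> component n F i" for j
  proof -
    from that have "(i, j) \<in> (edge_rel F)\<^sup>*" "j < n" unfolding component_def by auto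
    then show ?thesis using const_on_componentsD[OF assms(2) _ i] by simp
  qed
  then have "(\<Sum>j\<in>component n F i. x $ j) = (\<Sum>j\<in>component n F i. x $ i)"
    by (rule sum.cong[OF refl])
  then show "(component_proj n F *\<^sub>v x) $ i = x $ i"
    unfolding component_proj_mult_vec[OF i assms(1)] using card_component_pos[OF i, of F] by simp
qed (use assms(1) in simp)

lemma component_proj_bvec:
  assumes "(u, v) \<in> (edge_rel F)\<^sup>*" "u < n" "v < n"
  shows "component_proj n F *\<^sub>v bvec n u v = 0\<^sub>v n"
proof (rule eq_vecI)
  fix i assume "i < dim_vec (0\<^sub>v n :: real vec)"
  then have i: "i < n" by simp
  have "u \<in> component n F i \<longleftrightarrow> v \<in> component n F i"
    using assms unfolding component_def by (blast intro: rtrancl_trans rtrancl_edge_rel_sym)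
  then have "(\<Sum>j\<in>component n F i. bvec n u v $ j) = 0"
    by (simp add: bvec_def component_def sum_subtractf)
  then show "(component_proj n F *\<^sub>v bvec n u v) $ i = 0\<^sub>v n $ i"
    unfolding component_proj_mult_vec[OF i bvec_carrier] using i by simp
qed simp

lemma transpose_component_proj: "transpose_mat (component_proj n F) = component_proj n F"
proof (rule eq_matI)
  fix i j assume "i < dim_row (component_proj n F)" "j < dim_col (component_proj n F)"
  then have ij: "i < n" "j < n" by simp_all
  show "transpose_mat (component_proj n F) $$ (i, j) = component_proj n F $$ (i, j)"
  proof (cases "(i, j) \<in> (edge_rel F)\<^sup>*")
    case True
    then show ?thesis
      using ij rtrancl_edge_rel_sym[OF True] component_eq[OF True]
      by (simp add: component_proj_def)
  next
    case False
    then show ?thesis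
      using ij rtrancl_edge_rel_sym[of j i] by (auto simp: component_proj_def)
  qed
qed simp_all

lemma const_on_components_col_component_proj:
  assumes "j < n"
  shows "const_on_components n F (col (component_proj n F) j)"
  unfolding const_on_components_def
proof (intro allI impI)
  fix i k assume "i < n" "k < n" and ik: "(i, k) \<in> (edge_rel F)\<^sup>*"
  then have "(i, j) \<in> (edge_rel F)\<^sup>* \<longleftrightarrow> (k, j) \<in> (edge_rel F)\<^sup>*"
    by (blast intro: rtrancl_trans rtrancl_edge_rel_sym)
  then show "col (component_proj n F) j $ i = col (component_proj n F) j $ k"
    using \<open>i < n\<close> \<open>k < n\<close> assms component_eq[OF ik] by (simp add: component_proj_def)
qed

lemma component_proj_idem: "component_proj n F * component_proj n F = component_proj n F"
proof (rule eq_matI)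
  fix i j assume "i < dim_row (component_proj n F)" "j < dim_col (component_proj n F)"
  then have ij: "i < n" "j < n" by simp_all
  have "(component_proj n F * component_proj n F) $$ (i, j)
      = (component_proj n F *\<^sub>v col (component_proj n F) j) $ i"
    using ij by simp
  also have "\<dots> = component_proj n F $$ (i, j)"
    using ij by (subst component_proj_fixes[OF _ const_on_components_col_component_proj[OF ij(2)]]) simp_all
  finally show "(component_proj n F * component_proj n F) $$ (i, j) = component_proj n F $$ (i, j)" .
qed simp_all

lemma laplacian_mult_component_proj:
  assumes "simple_graph n F"
  shows "laplacian n F w * component_proj n F = 0\<^sub>m n n"
proof (rule eq_matI)
  fix i j assume "i < dim_row (0\<^sub>m n n :: real mat)" "j < dim_col (0\<^sub>m n n :: real mat)"
  then have ij: "i < n" "j < n" by simp_all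
  have "(laplacian n F w * component_proj n F) $$ (i, j)
      = (laplacian n F w *\<^sub>v col (component_proj n F) j) $ i"
    using ij by simp
  also have "\<dots> = 0"
    using laplacian_mult_vec_eq_0[OF assms _ const_on_components_col_component_proj[OF ij(2)]] ij
    by simp
  finally show "(laplacian n F w * component_proj n F) $$ (i, j) = (0\<^sub>m n n :: real mat) $$ (i, j)"
    using ij by simp
qed simp_all

lemma laplacian_plus_component_proj_inj:
  assumes F: "simple_graph n F" and w: "\<forall>e\<in>F. 0 < w e" and x: "x \<in> carrier_vec n"
    and "(laplacian n F w + component_proj n F) *\<^sub>v x = 0\<^sub>v n"
  shows "x = 0\<^sub>v n"
proof -
  let ?L = "laplacian n F w" and ?P = "component_proj n F"
  have Px: "x \<bullet> (?P *\<^sub>v x) = (?P *\<^sub>v x) \<bullet> (?P *\<^sub>v x)"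
    by (rule symmetric_idempotent_quadratic_form[OF component_proj_carrier
          transpose_component_proj component_proj_idem x])
  have "x \<bullet> (?L *\<^sub>v x) + x \<bullet> (?P *\<^sub>v x) = x \<bullet> ((?L + ?P) *\<^sub>v x)"
    using add_mult_distrib_mat_vec[OF laplacian_carrier component_proj_carrier x]
      scalar_prod_add_distrib[OF x mult_mat_vec_carrier[OF laplacian_carrier x]
        mult_mat_vec_carrier[OF component_proj_carrier x]]
    by simp
  also have "\<dots> = 0" using assms(4) x by simp
  finally have sum0: "x \<bullet> (?L *\<^sub>v x) + (?P *\<^sub>v x) \<bullet> (?P *\<^sub>v x) = 0" unfolding Px .
  have L0: "x \<bullet> (?L *\<^sub>v x) = 0" and P0: "(?P *\<^sub>v x) \<bullet> (?P *\<^sub>v x) = 0"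
    using sum0 laplacian_quadratic_form_nonneg[OF F w x] scalar_prod_self_nonneg[of "?P *\<^sub>v x"]
    by linarith+
  have "const_on_components n F x" by (rule const_on_components_of_laplacian_quadratic_form_eq_0[OF F w x L0])
  then have "?P *\<^sub>v x = x" by (rule component_proj_fixes[OF x])
  then show ?thesis using scalar_prod_self_eq_0[OF P0] x by simp
qed

lemma laplacian_pinv:
  assumes "simple_graph n F" "\<forall>e\<in>F. 0 < w e"
  shows "pinv (laplacian n F w) \<in> carrier_mat n n"
    and "laplacian n F w * pinv (laplacian n F w) = 1\<^sub>m n - component_proj n F"
  using mult_pinv_kernel_projection[OF laplacian_carrier component_proj_carrier
      transpose_laplacian transpose_component_proj component_proj_idem
      laplacian_mult_component_proj[OF assms(1)] laplacian_plus_component_proj_inj[OF assms]]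
  by simp_all

section \<open>Effective resistance\<close>

lemma eff_res_potential_bound:
  assumes F: "simple_graph n F" and w: "\<forall>e\<in>F. 0 < w e" and u: "u < n" and v: "v < n"
    and uv: "(u, v) \<in> (edge_rel F)\<^sup>*" and x: "x \<in> carrier_vec n"
  shows "0 \<le> eff_res (laplacian n F w) u v"
    and "(x $ u - x $ v)\<^sup>2 \<le> eff_res (laplacian n F w) u v * (x \<bullet> (laplacian n F w *\<^sub>v x))"
proof -
  let ?L = "laplacian n F w"
  define b where "b = bvec n u v"
  define y where "y = pinv ?L *\<^sub>v b"
  have b: "b \<in> carrier_vec n" unfolding b_def by simp
  have y: "y \<in> carrier_vec n"
    unfolding y_def using laplacian_pinv(1)[OF F w] b by simp
  have "?L *\<^sub>v y = (1\<^sub>m n - component_proj n F) *\<^sub>v b"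
    unfolding y_def using laplacian_pinv[OF F w] b
    by (simp add: assoc_mult_mat_vec[symmetric, of _ n n _ n])
  also have "\<dots> = b"
    using b component_proj_bvec[OF uv u v] unfolding b_def
    by (simp add: minus_mult_distrib_mat_vec[of _ n n])
  finally have Ly: "?L *\<^sub>v y = b" .
  have transfer: "b \<bullet> z = y \<bullet> (?L *\<^sub>v z)" if "z \<in> carrier_vec n" for z
    using transpose_vec_mult_scalar[OF laplacian_carrier[of n F w] that y] by (simp add: Ly)
  have R: "eff_res ?L u v = y \<bullet> (?L *\<^sub>v y)"
    using transfer[OF y] unfolding eff_res_def b_def y_def by simp
  show "0 \<le> eff_res ?L u v"
    unfolding R by (rule laplacian_quadratic_form_nonneg[OF F w y])
  have "(x $ u - x $ v)\<^sup>2 = (\<Sum>e\<in>F. w e * ((edge_vec n e \<bullet> y) * (edge_vec n e \<bullet> x)))\<^sup>2"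
    using transfer[OF x] bvec_scalar_prod[OF u v x] scalar_prod_laplacian[OF F x y]
    unfolding b_def by simp
  also have "\<dots> \<le> (\<Sum>e\<in>F. w e * (edge_vec n e \<bullet> y)\<^sup>2) * (\<Sum>e\<in>F. w e * (edge_vec n e \<bullet> x)\<^sup>2)"
    using w by (intro weighted_Cauchy_Schwarz_sum) (simp add: less_imp_le)
  also have "\<dots> = eff_res ?L u v * (x \<bullet> (?L *\<^sub>v x))"
    unfolding R laplacian_quadratic_form[OF F y] laplacian_quadratic_form[OF F x] ..
  finally show "(x $ u - x $ v)\<^sup>2 \<le> eff_res ?L u v * (x \<bullet> (?L *\<^sub>v x))" .
qed

section \<open>Capped hop distance\<close>

lemma walk_of_len_refl: "walk_of_len F u u 0"
  unfolding walk_of_len_def by (intro exI[of _ "[u]"]) simp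

lemma walk_of_len_snoc:
  assumes "walk_of_len F u a k" "{a, b} \<in> F"
  shows "walk_of_len F u b (Suc k)"
proof -
  obtain p where p: "length p = Suc k" "hd p = u" "last p = a" "\<forall>i<k. {p ! i, p ! Suc i} \<in> F"
    using assms(1) unfolding walk_of_len_def by blast
  have "p \<noteq> []" using p(1) by auto
  then have "p ! k = a" using p(1,3) by (simp add: last_conv_nth)
  then have "\<forall>i<Suc k. {(p @ [b]) ! i, (p @ [b]) ! Suc i} \<in> F"
    using p(1,4) assms(2) by (auto simp: nth_append less_Suc_eq)
  then show ?thesis
    unfolding walk_of_len_def using p(1,2) \<open>p \<noteq> []\<close> by (intro exI[of _ "p @ [b]"]) auto
qed

lemma walk_of_len_imp_rtrancl:
  assumes "walk_of_len F u v k"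
  shows "(u, v) \<in> (edge_rel F)\<^sup>*"
proof -
  obtain p where p: "length p = Suc k" "hd p = u" "last p = v" "\<forall>i<k. {p ! i, p ! Suc i} \<in> F"
    using assms unfolding walk_of_len_def by blast
  have "p \<noteq> []" using p(1) by auto
  have "(u, p ! i) \<in> (edge_rel F)\<^sup>*" if "i \<le> k" for i
    using that
  proof (induction i)
    case 0
    then show ?case using \<open>p \<noteq> []\<close> p(2) by (simp add: hd_conv_nth)
  next
    case (Suc i)
    then have "(p ! i, p ! Suc i) \<in> edge_rel F" using p(4) by (simp add: edge_rel_def)
    with Suc show ?case by (simp add: rtrancl_into_rtrancl)
  qed
  then have "(u, p ! k) \<in> (edge_rel F)\<^sup>*" by simp
  moreover have "p ! k = v" using p(1,3) \<open>p \<noteq> []\<close> by (simp add: last_conv_nth)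
  ultimately show ?thesis by simp
qed

lemma walk_of_len_hop_dist:
  assumes "hop_dist F u v = enat s"
  shows "walk_of_len F u v s" "walk_of_len F u v k \<Longrightarrow> s \<le> k"
proof -
  have ex: "\<exists>k. walk_of_len F u v k"
    using assms unfolding hop_dist_def by (auto split: if_splits)
  then have s: "s = (LEAST k. walk_of_len F u v k)"
    using assms unfolding hop_dist_def by simp
  show "walk_of_len F u v s" unfolding s by (rule LeastI_ex[OF ex])
  show "walk_of_len F u v k \<Longrightarrow> s \<le> k" unfolding s by (rule Least_le)
qed

definition capped_hop_dist :: "nat set set \<Rightarrow> nat \<Rightarrow> nat \<Rightarrow> nat \<Rightarrow> nat" where
  "capped_hop_dist F u s i = (LEAST k. walk_of_len F u i k \<or> k = s)"

lemma capped_hop_dist_le: "capped_hop_dist F u s i \<le> s"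
  unfolding capped_hop_dist_def by (rule Least_le) simp

lemma capped_hop_dist_self: "capped_hop_dist F u s u = 0"
  unfolding capped_hop_dist_def using walk_of_len_refl by (intro Least_eq_0) blast

lemma capped_hop_dist_edge:
  assumes "{a, b} \<in> F"
  shows "capped_hop_dist F u s b \<le> capped_hop_dist F u s a + 1"
proof (cases "capped_hop_dist F u s a = s")
  case True
  then show ?thesis using capped_hop_dist_le[of F u s b] by simp
next
  case False
  have "walk_of_len F u a (capped_hop_dist F u s a) \<or> capped_hop_dist F u s a = s"
    unfolding capped_hop_dist_def by (rule LeastI[of _ s]) simp
  with False have "walk_of_len F u b (Suc (capped_hop_dist F u s a))"
    using walk_of_len_snoc assms by blast
  then show ?thesis unfolding capped_hop_dist_def by (simp add: Least_le)
qed

lemma capped_hop_dist_target: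
  assumes "hop_dist F u v = enat s"
  shows "capped_hop_dist F u s v = s"
  unfolding capped_hop_dist_def
  by (rule Least_equality) (auto dest: walk_of_len_hop_dist(2)[OF assms])

lemma laplacian_energy_capped_hop_dist:
  fixes u s :: nat
  assumes F: "simple_graph n F" and w: "\<forall>e\<in>F. 0 < w e"
  defines "x \<equiv> vec n (\<lambda>i. real (capped_hop_dist F u s i))"
  shows "x \<bullet> (laplacian n F w *\<^sub>v x) \<le> (\<Sum>e\<in>F. w e)"
proof -
  have x: "x \<in> carrier_vec n" unfolding x_def by simp
  have "(edge_vec n e \<bullet> x)\<^sup>2 \<le> 1" if "e \<in> F" for e
  proof -
    obtain a b where ab: "a < n" "b < n" "a \<noteq> b" and e: "e = {a, b}"
      using F \<open>e \<in> F\<close> unfolding simple_graph_def by blast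
    have "capped_hop_dist F u s b \<le> capped_hop_dist F u s a + 1"
      "capped_hop_dist F u s a \<le> capped_hop_dist F u s b + 1"
      using capped_hop_dist_edge \<open>e \<in> F\<close> e by (auto simp: insert_commute)
    then have "\<bar>x $ a - x $ b\<bar> \<le> 1" unfolding x_def using ab by simp
    then show ?thesis
      unfolding e using abs_edge_vec_scalar_prod[OF ab x] by (simp add: abs_square_le_1)
  qed
  then have "(\<Sum>e\<in>F. w e * (edge_vec n e \<bullet> x)\<^sup>2) \<le> (\<Sum>e\<in>F. w e)"
    using w by (intro sum_mono) (simp add: mult_left_le less_imp_le)
  then show ?thesis by (simp add: laplacian_quadratic_form[OF F x])
qed

section \<open>Spectral sparsifiers\<close>

lemma sparsifier_quadratic_form_bounds:
  assumes "is_spectral_sparsifier n \<epsilon> E EH w" "x \<in> carrier_vec n"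
  shows "(1 - \<epsilon>) * (x \<bullet> (laplacian n EH w *\<^sub>v x)) \<le> x \<bullet> (laplacian n E (\<lambda>_. 1) *\<^sub>v x)"
    and "x \<bullet> (laplacian n E (\<lambda>_. 1) *\<^sub>v x) \<le> (1 + \<epsilon>) * (x \<bullet> (laplacian n EH w *\<^sub>v x))"
  using assms unfolding is_spectral_sparsifier_def loewner_le_def
  by (simp_all add: scalar_prod_smult_mat_vec[OF laplacian_carrier])

lemma sparsifier_total_weight:
  assumes E: "simple_graph n E" and H: "is_spectral_sparsifier n \<epsilon> E EH w"
  shows "(1 - \<epsilon>) * (\<Sum>e\<in>EH. w e) \<le> real (card E)"
proof -
  have EH: "simple_graph n EH"
    using H simple_graph_mono[OF E] unfolding is_spectral_sparsifier_def by blast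
  have "(1 - \<epsilon>) * laplacian n EH w $$ (i, i) \<le> laplacian n E (\<lambda>_. 1) $$ (i, i)" if "i < n" for i
    using sparsifier_quadratic_form_bounds(1)[OF H unit_vec_carrier[of n i]]
    unfolding unit_vec_quadratic_form[OF laplacian_carrier that] .
  then have "(1 - \<epsilon>) * (\<Sum>i<n. laplacian n EH w $$ (i, i)) \<le> (\<Sum>i<n. laplacian n E (\<lambda>_. 1) $$ (i, i))"
    unfolding sum_distrib_left by (intro sum_mono) simp
  then show ?thesis
    unfolding sum_diagonal_laplacian[OF E] sum_diagonal_laplacian[OF EH] by simp
qed

lemma sparsifier_energy_bounds:
  assumes eps: "\<epsilon> \<le> 1/2" and E: "simple_graph n E" and H: "is_spectral_sparsifier n \<epsilon> E EH w"
    and x: "x \<in> carrier_vec n" and energy: "x \<bullet> (laplacian n EH w *\<^sub>v x) \<le> (\<Sum>e\<in>EH. w e)"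
  shows "x \<bullet> (laplacian n EH w *\<^sub>v x) \<le> 2 * real (card E)"
    and "x \<bullet> (laplacian n E (\<lambda>_. 1) *\<^sub>v x) \<le> 3 * real (card E)"
proof -
  let ?W = "\<Sum>e\<in>EH. w e" and ?qH = "x \<bullet> (laplacian n EH w *\<^sub>v x)"
  have w: "\<forall>e\<in>EH. 0 < w e" and EH: "simple_graph n EH"
    using H simple_graph_mono[OF E] unfolding is_spectral_sparsifier_def by blast+
  have "0 \<le> ?W" using w by (simp add: sum_nonneg less_imp_le)
  then have "\<epsilon> * ?W \<le> 1/2 * ?W" by (rule mult_right_mono[OF eps])
  then have "?W \<le> 2 * real (card E)" using sparsifier_total_weight[OF E H] by (simp add: algebra_simps)
  then show qH: "?qH \<le> 2 * real (card E)" using energy by linarith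
  have "(1 + \<epsilon>) * ?qH \<le> 3/2 * ?qH"
    using eps laplacian_quadratic_form_nonneg[OF EH w x] by (intro mult_right_mono) simp_all
  then show "x \<bullet> (laplacian n E (\<lambda>_. 1) *\<^sub>v x) \<le> 3 * real (card E)"
    using sparsifier_quadratic_form_bounds(2)[OF H x] qH by linarith
qed

lemma eff_res_sparsifier_lower_bound:
  assumes eps: "\<epsilon> \<le> 1/2" and E: "simple_graph n E" and H: "is_spectral_sparsifier n \<epsilon> E EH w"
    and u: "u < n" and v: "v < n" and dist: "hop_dist EH u v = enat s"
  shows "real s ^ 2 / (3 * real (card E)) \<le> eff_res (laplacian n E (\<lambda>_. 1)) u v"
    and "real s ^ 2 / (3 * real (card E)) \<le> eff_res (laplacian n EH w) u v"
proof -
  let ?m = "real (card E)"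
  have sub: "EH \<subseteq> E" and w: "\<forall>e\<in>EH. 0 < w e"
    using H unfolding is_spectral_sparsifier_def by blast+
  have EH: "simple_graph n EH" by (rule simple_graph_mono[OF E sub])
  define x where "x = vec n (\<lambda>i. real (capped_hop_dist EH u s i))"
  have x: "x \<in> carrier_vec n" unfolding x_def by simp
  have drop: "(x $ u - x $ v)\<^sup>2 = (real s)\<^sup>2"
    unfolding x_def using u v capped_hop_dist_self capped_hop_dist_target[OF dist] by simp
  note energy = sparsifier_energy_bounds[OF eps E H x
      laplacian_energy_capped_hop_dist[OF EH w, of u s, folded x_def]]
  have uv: "(u, v) \<in> (edge_rel EH)\<^sup>*"
    by (rule walk_of_len_imp_rtrancl[OF walk_of_len_hop_dist(1)[OF dist]])
  then have uv': "(u, v) \<in> (edge_rel E)\<^sup>*"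
    using sub rtrancl_mono[of "edge_rel EH" "edge_rel E"] unfolding edge_rel_def by blast
  have bound: "(real s)\<^sup>2 / (3 * ?m) \<le> R"
    if "0 \<le> R" "(real s)\<^sup>2 \<le> R * q" "q \<le> 3 * ?m" for R q
  proof (cases "card E = 0")
    case False
    then have "(real s)\<^sup>2 \<le> R * (3 * ?m)"
      using that by (meson mult_left_mono order_trans)
    then show ?thesis using False by (simp add: divide_le_eq mult.commute)
  qed (use that in simp)
  show "real s ^ 2 / (3 * ?m) \<le> eff_res (laplacian n E (\<lambda>_. 1)) u v"
    using eff_res_potential_bound[OF E _ u v uv' x] drop energy(2) by (intro bound) auto
  show "real s ^ 2 / (3 * ?m) \<le> eff_res (laplacian n EH w) u v"
    using eff_res_potential_bound[OF EH w u v uv x] drop energy(1) by (intro bound) auto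
qed

theorem corollary4p3:
  shows "\<exists>\<epsilon>0>0. \<forall>\<epsilon>. 0 < \<epsilon> \<and> \<epsilon> \<le> \<epsilon>0 \<longrightarrow>
    (\<exists>c>0. \<exists>k::nat. \<forall>(n::nat) E EH w u v (s::nat).
       simple_graph n E \<and> is_spectral_sparsifier n \<epsilon> E EH w \<and>
       u < n \<and> v < n \<and> hop_dist EH u v = enat s \<longrightarrow>
         eff_res (laplacian n E (\<lambda>_. 1)) u v
           \<ge> c * (real s ^ 2 / real (card E)) / (log 2 (real n)) ^ k \<and>
         eff_res (laplacian n EH w) u v
           \<ge> c * (real s ^ 2 / real (card E)) / (log 2 (real n)) ^ k)"
proof (rule exI[of _ "1/2"], intro conjI allI impI exI[of _ "1/3"] exI[of _ "0::nat"])
  fix \<epsilon> :: real and n E EH w u v and s :: nat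
  assume "0 < \<epsilon> \<and> \<epsilon> \<le> 1/2"
    and "simple_graph n E \<and> is_spectral_sparsifier n \<epsilon> E EH w \<and> u < n \<and> v < n \<and>
      hop_dist EH u v = enat s"
  then show "eff_res (laplacian n E (\<lambda>_. 1)) u v
      \<ge> 1/3 * (real s ^ 2 / real (card E)) / log 2 (real n) ^ 0"
    and "eff_res (laplacian n EH w) u v \<ge> 1/3 * (real s ^ 2 / real (card E)) / log 2 (real n) ^ 0"
    using eff_res_sparsifier_lower_bound[of \<epsilon> n E EH w u v s] by simp_all
qed simp_all

end
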